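(* For every $N\ge1$ and all complex numbers $z_1,\dots,z_N$, $$\prod_{i=1}^N\|x-z_i\|\le\sqrt{\frac{e^N}{N+1}}\,\Big\|\prod_{i=1}^N(x-z_i)\Big\|,$$ where $\|\cdot\|$ is the Bombieri–Weyl norm.
   Context: The Bombieri–Weyl norm of a univariate polynomial $P(z)=\sum_{i=0}^N a_iz^i$ of degree $N$ is $\|P\|=\big(\sum_{i=0}^N\binom{N}{i}^{-1}|a_i|^2\big)^{1/2}$ (so in particular $\|x-z\|=\sqrt{1+|z|^2}$). *)

theory Defs
  imports "HOL-Analysis.Analysis" "HOL-Computational_Algebra.Polynomial"
begin

definition bw_norm :: "complex poly \<Rightarrow> real" where
  "bw_norm P = sqrt (\<Sum>i\<le>degree P. (cmod (coeff P i))\<^sup>2 / real (degree P choose i))"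

end

theory Submission
  imports Defs "HOL-Real_Asymp.Real_Asymp"
begin

(* Write P = prod_i (x - z_i) = sum_k a_k x^k. The Beta integrals
   int_0^1 t^k (1 - t)^(N - k) dt = 1 / ((N + 1) (N choose k)) turn ||P||^2 / (N + 1) into the
   integral over t in [0, 1] of sum_k |a_k|^2 t^k (1 - t)^(N - k), the squared coefficient norm of
   prod_i (sqrt t x - sqrt (1 - t) z_i). By Mahler's bound this is at least
   prod_i max (t, |z_i|^2 (1 - t)). Finally int_0^1 ln max (t, c (1 - t)) dt = ln (1 + c) - 1, so
   Jensen's inequality for exp bounds the integral of that product from below by
   e^(-N) prod_i (1 + |z_i|^2) = e^(-N) prod_i ||x - z_i||^2. *)

definition coeff_sqnorm :: "complex poly \<Rightarrow> real" where
  "coeff_sqnorm p = (\<Sum>k\<le>degree p. (cmod (coeff p k))\<^sup>2)"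

lemma coeff_sqnorm_eq_sum:
  assumes "degree p \<le> D"
  shows "coeff_sqnorm p = (\<Sum>k\<le>D. (cmod (coeff p k))\<^sup>2)"
  unfolding coeff_sqnorm_def
  by (rule sum.mono_neutral_left) (use assms in \<open>auto simp: coeff_eq_0\<close>)

lemma cmod_coeff_sq_le_coeff_sqnorm: "(cmod (coeff p k))\<^sup>2 \<le> coeff_sqnorm p"
proof (cases "k \<le> degree p")
  case True
  then show ?thesis unfolding coeff_sqnorm_def by (intro member_le_sum) auto
next
  case False
  then show ?thesis by (simp add: coeff_eq_0 coeff_sqnorm_def sum_nonneg)
qed

lemma cmod_sq_diff_cnj_swap:
  "(cmod (b * y + a * x))\<^sup>2 - (cmod (cnj a * y + cnj b * x))\<^sup>2
     = ((cmod b)\<^sup>2 - (cmod a)\<^sup>2) * ((cmod y)\<^sup>2 - (cmod x)\<^sup>2)"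
  by (simp only: cmod_power2) (simp add: power2_eq_square algebra_simps)

text \<open>Swapping the factor \<open>b + a x\<close> for \<open>cnj a + cnj b x\<close> changes the contribution of the
  coefficient pair \<open>(h\<^sub>j, h\<^sub>j\<^sub>+\<^sub>1)\<close> by \<open>(|b|\<^sup>2 - |a|\<^sup>2)(|h\<^sub>j\<^sub>+\<^sub>1|\<^sup>2 - |h\<^sub>j|\<^sup>2)\<close>, and these
  differences telescope to zero.\<close>
lemma coeff_sqnorm_swap_linear_factor:
  "coeff_sqnorm ([:b, a:] * h) = coeff_sqnorm ([:cnj a, cnj b:] * h)"
proof -
  define m where "m = degree h"
  have deg: "degree ([:b', a':] * h) \<le> Suc m" for a' b'
    using order_trans[OF degree_mult_le, of "[:b', a':]" h "1 + m"] by (simp add: m_def)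
  have expand: "coeff_sqnorm ([:b', a':] * h) = (cmod (b' * coeff h 0))\<^sup>2
      + (\<Sum>j\<le>m. (cmod (b' * coeff h (Suc j) + a' * coeff h j))\<^sup>2)" for a' b'
    unfolding coeff_sqnorm_eq_sum[OF deg] by (subst sum.atMost_Suc_shift) (simp add: coeff_pCons')
  have telescope: "(\<Sum>j\<le>m. (cmod (coeff h (Suc j)))\<^sup>2 - (cmod (coeff h j))\<^sup>2)
      = - (cmod (coeff h 0))\<^sup>2"
    using sum_Suc_diff[of 0 m "\<lambda>j. (cmod (coeff h j))\<^sup>2"]
    by (simp add: atMost_atLeast0 m_def coeff_eq_0)
  have "coeff_sqnorm ([:b, a:] * h) - coeff_sqnorm ([:cnj a, cnj b:] * h)
      = (cmod (b * coeff h 0))\<^sup>2 - (cmod (cnj a * coeff h 0))\<^sup>2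
        + (\<Sum>j\<le>m. ((cmod b)\<^sup>2 - (cmod a)\<^sup>2)
                     * ((cmod (coeff h (Suc j)))\<^sup>2 - (cmod (coeff h j))\<^sup>2))"
    unfolding expand by (simp add: sum_subtractf[symmetric] cmod_sq_diff_cnj_swap)
  also have "\<dots> = ((cmod b)\<^sup>2 - (cmod a)\<^sup>2) * ((cmod (coeff h 0))\<^sup>2
      + (\<Sum>j\<le>m. (cmod (coeff h (Suc j)))\<^sup>2 - (cmod (coeff h j))\<^sup>2))"
    by (simp add: norm_mult power_mult_distrib distrib_left sum_distrib_left left_diff_distrib)
  finally show ?thesis by (simp add: telescope)
qed

definition lead_max_linear :: "complex \<Rightarrow> complex \<Rightarrow> complex poly" where
  "lead_max_linear b a = (if cmod b \<le> cmod a then [:b, a:] else [:cnj a, cnj b:])"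

lemma coeff_sqnorm_prod_lead_max_linear:
  assumes "finite I"
  shows "coeff_sqnorm ((\<Prod>i\<in>I. [:b i, a i:]) * h)
       = coeff_sqnorm ((\<Prod>i\<in>I. lead_max_linear (b i) (a i)) * h)"
  using assms
proof (induction I arbitrary: h rule: finite_induct)
  case empty
  then show ?case by simp
next
  case (insert j I)
  have "coeff_sqnorm ((\<Prod>i\<in>insert j I. [:b i, a i:]) * h)
      = coeff_sqnorm ((\<Prod>i\<in>I. [:b i, a i:]) * ([:b j, a j:] * h))"
    by (simp only: prod.insert[OF insert.hyps] mult_ac)
  also have "\<dots> = coeff_sqnorm ([:b j, a j:] * ((\<Prod>i\<in>I. lead_max_linear (b i) (a i)) * h))"
    using insert.IH[of "[:b j, a j:] * h"] by (simp only: mult_ac)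
  also have "\<dots> = coeff_sqnorm (lead_max_linear (b j) (a j)
                        * ((\<Prod>i\<in>I. lead_max_linear (b i) (a i)) * h))"
    by (cases "cmod (b j) \<le> cmod (a j)")
      (simp_all only: lead_max_linear_def[of "b j" "a j"] if_True if_False
        coeff_sqnorm_swap_linear_factor[of "b j" "a j"])
  also have "\<dots> = coeff_sqnorm ((\<Prod>i\<in>insert j I. lead_max_linear (b i) (a i)) * h)"
    by (simp only: prod.insert[OF insert.hyps] mult_ac)
  finally show ?case .
qed

lemma degree_prod_linear_le:
  fixes a b :: "'i \<Rightarrow> 'a::comm_semiring_1"
  assumes "finite I"
  shows "degree (\<Prod>i\<in>I. [:b i, a i:]) \<le> card I"
proof -
  have "degree (\<Prod>i\<in>I. [:b i, a i:]) \<le> (\<Sum>i\<in>I. degree [:b i, a i:])"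
    using degree_prod_sum_le[OF assms, of "\<lambda>i. [:b i, a i:]"] by (simp only: o_def)
  also have "\<dots> \<le> card I"
    using sum_bounded_above[of I "\<lambda>i. degree [:b i, a i:]" 1] by simp
  finally show ?thesis .
qed

lemma coeff_prod_linear_card:
  fixes a b :: "'i \<Rightarrow> 'a::comm_semiring_1"
  assumes "finite I"
  shows "coeff (\<Prod>i\<in>I. [:b i, a i:]) (card I) = (\<Prod>i\<in>I. a i)"
  using assms
proof (induction I rule: finite_induct)
  case empty
  then show ?case by simp
next
  case (insert j I)
  have "coeff (\<Prod>i\<in>I. [:b i, a i:]) (Suc (card I)) = 0"
    using degree_prod_linear_le[OF insert.hyps(1), of b a] by (simp add: coeff_eq_0)
  then show ?case using insert by (simp add: coeff_pCons')
qed

text \<open>Mahler's bound \<open>M(f) \<le> \<parallel>f\<parallel>\<^sub>2\<close> for products of linear factors: after the swaps every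
  factor has its larger coefficient in leading position, and the top coefficient alone gives
  the bound.\<close>
lemma prod_max_cmod_sq_le_coeff_sqnorm:
  assumes "finite I"
  shows "(\<Prod>i\<in>I. max (cmod (a i)) (cmod (b i)))\<^sup>2 \<le> coeff_sqnorm (\<Prod>i\<in>I. [:b i, a i:])"
proof -
  define a' where "a' i = coeff (lead_max_linear (b i) (a i)) 1" for i
  define b' where "b' i = coeff (lead_max_linear (b i) (a i)) 0" for i
  have swapped: "lead_max_linear (b i) (a i) = [:b' i, a' i:]" for i
    unfolding a'_def b'_def lead_max_linear_def by auto
  have "cmod (a' i) = max (cmod (a i)) (cmod (b i))" for i
    unfolding a'_def lead_max_linear_def by auto
  then have "(\<Prod>i\<in>I. max (cmod (a i)) (cmod (b i)))\<^sup>2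
      = (cmod (coeff (\<Prod>i\<in>I. [:b' i, a' i:]) (card I)))\<^sup>2"
    by (simp add: coeff_prod_linear_card[OF assms] flip: prod_norm)
  also have "\<dots> \<le> coeff_sqnorm (\<Prod>i\<in>I. [:b' i, a' i:])"
    by (rule cmod_coeff_sq_le_coeff_sqnorm)
  also have "\<dots> = coeff_sqnorm (\<Prod>i\<in>I. [:b i, a i:])"
    using coeff_sqnorm_prod_lead_max_linear[OF assms, of b a 1] by (simp add: swapped)
  finally show ?thesis .
qed

lemma coeff_mult_scaled_linear:
  fixes P Q :: "'a::comm_semiring_1 poly"
  assumes "degree P \<le> n" and Q: "\<And>m. coeff Q m = coeff P m * s ^ m * r ^ (n - m)"
  shows "coeff ([:c * r, s:] * Q) k = coeff ([:c, 1:] * P) k * s ^ k * r ^ (Suc n - k)"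
proof (cases k)
  case 0
  then show ?thesis
    by (simp add: Q algebra_simps)
next
  case (Suc m)
  have top: "r * (coeff P (Suc m) * r ^ (n - Suc m)) = coeff P (Suc m) * r ^ (n - m)"
  proof (cases "m < n")
    case True
    then have "n - m = Suc (n - Suc m)" by simp
    then show ?thesis by (simp add: mult.left_commute)
  next
    case False
    then have "coeff P (Suc m) = 0"
      using assms(1) by (simp add: coeff_eq_0)
    then show ?thesis by simp
  qed
  have "coeff ([:c * r, s:] * Q) (Suc m) = c * r * coeff Q (Suc m) + s * coeff Q m"
    by (simp add: coeff_pCons')
  also have "\<dots> = c * s ^ Suc m * (r * (coeff P (Suc m) * r ^ (n - Suc m)))
                  + coeff P m * s ^ Suc m * r ^ (n - m)"
    by (simp add: Q algebra_simps)
  also have "\<dots> = coeff ([:c, 1:] * P) (Suc m) * s ^ Suc m * r ^ (n - m)"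
    by (simp only: top) (simp add: coeff_pCons' algebra_simps)
  finally show ?thesis
    by (simp add: Suc)
qed

lemma coeff_prod_scaled_linear:
  fixes c :: "'i \<Rightarrow> 'a::comm_semiring_1"
  assumes "finite I"
  shows "coeff (\<Prod>i\<in>I. [:c i * r, s:]) k = coeff (\<Prod>i\<in>I. [:c i, 1:]) k * s ^ k * r ^ (card I - k)"
  using assms
proof (induction I arbitrary: k rule: finite_induct)
  case empty
  then show ?case by (cases k) simp_all
next
  case (insert j I)
  have "coeff ([:c j * r, s:] * (\<Prod>i\<in>I. [:c i * r, s:])) k
      = coeff ([:c j, 1:] * (\<Prod>i\<in>I. [:c i, 1:])) k * s ^ k * r ^ (Suc (card I) - k)"
    by (rule coeff_mult_scaled_linear[OF degree_prod_linear_le[OF insert.hyps(1)] insert.IH])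
  then show ?case
    using insert.hyps by simp
qed

lemma prod_max_le_weighted_coeff_sum:
  fixes z :: "'i \<Rightarrow> complex" and t :: real
  assumes "finite I" and t: "0 \<le> t" "t \<le> 1"
  shows "(\<Prod>i\<in>I. max t ((cmod (z i))\<^sup>2 * (1 - t)))
     \<le> (\<Sum>k\<le>card I. (cmod (coeff (\<Prod>i\<in>I. [:- z i, 1:]) k))\<^sup>2 * (t ^ k * (1 - t) ^ (card I - k)))"
proof -
  define s where "s = complex_of_real (sqrt t)"
  define r where "r = complex_of_real (sqrt (1 - t))"
  have factor: "max t ((cmod (z i))\<^sup>2 * (1 - t)) = (max (cmod s) (cmod (- z i * r)))\<^sup>2" for i
  proof -
    have "max (cmod s) (cmod (- z i * r)) = max (sqrt t) (sqrt ((cmod (z i))\<^sup>2 * (1 - t)))"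
      using t by (simp add: s_def r_def norm_mult real_sqrt_mult)
    also have "\<dots> = sqrt (max t ((cmod (z i))\<^sup>2 * (1 - t)))"
      by (rule max_of_mono) (rule monoI, rule real_sqrt_le_mono)
    finally show ?thesis using t by simp
  qed
  have "(\<Prod>i\<in>I. max t ((cmod (z i))\<^sup>2 * (1 - t))) = (\<Prod>i\<in>I. max (cmod s) (cmod (- z i * r)))\<^sup>2"
    by (simp add: factor prod_power_distrib)
  also have "\<dots> \<le> coeff_sqnorm (\<Prod>i\<in>I. [:- z i * r, s:])"
    by (rule prod_max_cmod_sq_le_coeff_sqnorm[OF assms(1)])
  also have "\<dots> = (\<Sum>k\<le>card I. (cmod (coeff (\<Prod>i\<in>I. [:- z i * r, s:]) k))\<^sup>2)"
    by (rule coeff_sqnorm_eq_sum[OF degree_prod_linear_le[OF assms(1)]])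
  also have "\<dots> = (\<Sum>k\<le>card I. (cmod (coeff (\<Prod>i\<in>I. [:- z i, 1:]) k))\<^sup>2 * (t ^ k * (1 - t) ^ (card I - k)))"
    using t by (simp only: coeff_prod_scaled_linear[OF assms(1)])
      (simp add: s_def r_def norm_mult norm_power power_mult_distrib mult.assoc flip: real_sqrt_power)
  finally show ?thesis .
qed

lemma continuous_on_x_ln_x: "continuous_on {0..} (\<lambda>x::real. x * ln x)"
  unfolding continuous_on_def
proof
  fix x :: real
  assume "x \<in> {0..}"
  show "((\<lambda>x. x * ln x) \<longlongrightarrow> x * ln x) (at x within {0..})"
  proof (cases "x = 0")
    case True
    have "((\<lambda>x::real. x * ln x) \<longlongrightarrow> 0) (at_right 0)"
      by real_asymp
    then show ?thesis
      using True by (simp add: at_within_Ici_at_right)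
  next
    case False
    with \<open>x \<in> {0..}\<close> have "isCont (\<lambda>x. x * ln x) x"
      by (intro continuous_intros) auto
    then have "continuous (at x within {0..}) (\<lambda>x. x * ln x)"
      by (rule continuous_at_imp_continuous_at_within)
    then show ?thesis
      by (simp add: continuous_within)
  qed
qed

lemma has_integral_ln:
  fixes a b :: real
  assumes "0 \<le> a" "a \<le> b"
  shows "(ln has_integral (b * ln b - b) - (a * ln a - a)) {a..b}"
proof -
  define F where "F t = t * ln t - t" for t :: real
  have "(ln has_integral F b - F a) {a..b}"
  proof (rule fundamental_theorem_of_calculus_interior)
    show "a \<le> b" "continuous_on {a..b} F"
      unfolding F_def using assms
      by (auto intro!: continuous_intros continuous_on_subset[OF continuous_on_x_ln_x])
    fix t
    assume "t \<in> {a<..<b}"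
    then have "0 < t"
      using assms by auto
    then show "(F has_vector_derivative ln t) (at t)"
      unfolding F_def has_real_derivative_iff_has_vector_derivative[symmetric]
      by (auto intro!: derivative_eq_intros)
  qed
  then show ?thesis
    by (simp add: F_def)
qed

lemma has_integral_ln_mult_one_minus:
  fixes b c :: real
  assumes "0 < c" "0 \<le> b" "b < 1"
  shows "((\<lambda>t. ln (c * (1 - t))) has_integral (b - 1) * ln (c * (1 - b)) - b + ln c) {0..b}"
proof -
  define G where "G t = (t - 1) * ln (c * (1 - t)) - t" for t :: real
  have "((\<lambda>t. ln (c * (1 - t))) has_integral G b - G 0) {0..b}"
  proof (rule fundamental_theorem_of_calculus_interior)
    show "0 \<le> b" "continuous_on {0..b} G"
      unfolding G_def using assms by (auto intro!: continuous_intros)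
    fix t
    assume "t \<in> {0<..<b}"
    then have "t < 1"
      using assms by simp
    then show "(G has_vector_derivative ln (c * (1 - t))) (at t)"
      unfolding G_def has_real_derivative_iff_has_vector_derivative[symmetric] using assms
      by (auto intro!: derivative_eq_intros simp: divide_simps)
  qed
  then show ?thesis
    by (simp add: G_def)
qed

lemma ln_max_has_integral:
  fixes c :: real
  assumes "0 \<le> c"
  shows "((\<lambda>t. ln (max t (c * (1 - t)))) has_integral ln (1 + c) - 1) {0..1}"
proof -
  define t\<^sub>0 where "t\<^sub>0 = c / (1 + c)"
  have t\<^sub>0: "0 \<le> t\<^sub>0" "t\<^sub>0 < 1" "c * (1 - t\<^sub>0) = t\<^sub>0"
    using assms by (auto simp: t\<^sub>0_def field_simps)
  have right: "((\<lambda>t. ln (max t (c * (1 - t)))) has_integral (1 * ln 1 - 1) - (t\<^sub>0 * ln t\<^sub>0 - t\<^sub>0))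
      {t\<^sub>0..1}"
  proof (rule has_integral_spike_finite[OF _ _ has_integral_ln[OF t\<^sub>0(1) less_imp_le[OF t\<^sub>0(2)]]])
    show "ln (max t (c * (1 - t))) = ln t" if "t \<in> {t\<^sub>0..1} - {t\<^sub>0}" for t
      using that assms by (auto simp: t\<^sub>0_def field_simps max_def)
  qed simp
  show ?thesis
  proof (cases "c = 0")
    case True
    then show ?thesis
      using right by (simp add: t\<^sub>0_def)
  next
    case False
    with assms have "0 < c" by simp
    have left: "((\<lambda>t. ln (max t (c * (1 - t)))) has_integral
        (t\<^sub>0 - 1) * ln (c * (1 - t\<^sub>0)) - t\<^sub>0 + ln c)
        {0..t\<^sub>0}"
    proof (rule has_integral_spike_finite[OF finite.emptyI _
          has_integral_ln_mult_one_minus[OF \<open>0 < c\<close> t\<^sub>0(1,2)]])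
      show "ln (max t (c * (1 - t))) = ln (c * (1 - t))" if "t \<in> {0..t\<^sub>0} - {}" for t
        using that assms by (auto simp: t\<^sub>0_def field_simps max_def)
    qed
    have "ln t\<^sub>0 = ln c - ln (1 + c)"
      using \<open>0 < c\<close> by (simp add: t\<^sub>0_def ln_div)
    then have sum: "(t\<^sub>0 - 1) * ln (c * (1 - t\<^sub>0)) - t\<^sub>0 + ln c + ((1 * ln 1 - 1) - (t\<^sub>0 * ln t\<^sub>0 - t\<^sub>0))
        = ln (1 + c) - 1"
      by (simp only: t\<^sub>0(3)) (simp add: algebra_simps)
    show ?thesis
      unfolding sum[symmetric] using t\<^sub>0 by (intro has_integral_combine[OF _ _ left right]) auto
  qed
qed

lemma exp_integral_le_integral_exp:
  fixes g :: "real \<Rightarrow> real"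
  assumes g: "(g has_integral a) {0..1}" and exp_g: "((\<lambda>t. exp (g t)) has_integral b) {0..1}"
  shows "exp a \<le> b"
proof -
  have "((\<lambda>t. exp a * (1 + (g t - a))) has_integral exp a * (1 + (a - a))) {0..1}"
    using has_integral_const_real[of 1 0 1] has_integral_const_real[of a 0 1]
    by (intro has_integral_mult_right has_integral_add has_integral_diff g) simp_all
  moreover have "exp a * (1 + (g t - a)) \<le> exp (g t)" for t
  proof -
    have "exp a * (1 + (g t - a)) \<le> exp a * exp (g t - a)"
      by (intro mult_left_mono exp_ge_add_one_self) simp
    then show ?thesis by (simp add: exp_diff)
  qed
  ultimately show ?thesis
    using has_integral_le[OF _ exp_g] by simp
qed

text \<open>Jensen's inequality for the sum of the logarithms of the factors, whose exponential is the
  product for \<open>t > 0\<close>.\<close>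
lemma prod_one_plus_le_integral_prod_max:
  fixes c :: "'i \<Rightarrow> real"
  assumes "finite I" and c: "\<And>i. i \<in> I \<Longrightarrow> 0 \<le> c i"
  shows "exp (- real (card I)) * (\<Prod>i\<in>I. 1 + c i)
    \<le> integral {0..1} (\<lambda>t. \<Prod>i\<in>I. max t (c i * (1 - t)))"
proof -
  define G where "G t = (\<Sum>i\<in>I. ln (max t (c i * (1 - t))))" for t :: real
  have "(G has_integral (\<Sum>i\<in>I. ln (1 + c i) - 1)) {0..1}"
    unfolding G_def using c by (intro has_integral_sum[OF assms(1)] ln_max_has_integral) auto
  moreover have "((\<lambda>t. exp (G t)) has_integral integral {0..1} (\<lambda>t. \<Prod>i\<in>I. max t (c i * (1 - t)))) {0..1}"
  proof (rule has_integral_spike_finite[of "{0}"])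
    show "((\<lambda>t. \<Prod>i\<in>I. max t (c i * (1 - t))) has_integral
        integral {0..1} (\<lambda>t. \<Prod>i\<in>I. max t (c i * (1 - t)))) {0..1}"
      by (intro integrable_integral integrable_continuous_real continuous_intros)
    fix t :: real
    assume "t \<in> {0..1} - {0}"
    then have "0 < max t (c i * (1 - t))" for i
      by (simp add: less_max_iff_disj)
    then show "exp (G t) = (\<Prod>i\<in>I. max t (c i * (1 - t)))"
      by (simp add: G_def exp_sum[OF assms(1)])
  qed simp
  ultimately have "exp (\<Sum>i\<in>I. ln (1 + c i) - 1)
      \<le> integral {0..1} (\<lambda>t. \<Prod>i\<in>I. max t (c i * (1 - t)))"
    by (rule exp_integral_le_integral_exp)
  moreover have "exp (\<Sum>i\<in>I. ln (1 + c i)) = (\<Prod>i\<in>I. 1 + c i)"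
    unfolding exp_sum[OF assms(1)] using c by (intro prod.cong) (auto simp: add_pos_nonneg)
  then have "exp (\<Sum>i\<in>I. ln (1 + c i) - 1) = exp (- real (card I)) * (\<Prod>i\<in>I. 1 + c i)"
    by (simp add: sum_subtractf exp_diff exp_minus field_simps)
  ultimately show ?thesis by simp
qed

lemma has_integral_power_mult_power_one_minus:
  "((\<lambda>t::real. t ^ a * (1 - t) ^ b) has_integral fact a * fact b / fact (a + b + 1)) {0..1}"
proof -
  have "((\<lambda>t. t powr (real a + 1 - 1) * (1 - t) powr (real b + 1 - 1))
      has_integral Beta (real a + 1) (real b + 1)) {0..1}"
    by (rule has_integral_Beta_real) auto
  moreover have "Beta (real a + 1) (real b + 1) = fact a * fact b / fact (a + b + 1)"
  proof -
    have "real a + 1 + (real b + 1) = 1 + real (a + b + 1)"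
      by simp
    then show ?thesis
      unfolding Beta_def using Gamma_fact[of a, where 'a=real] Gamma_fact[of b, where 'a=real]
        Gamma_fact[of "a + b + 1", where 'a=real]
      by (simp only: add.commute)
  qed
  ultimately have powr: "((\<lambda>t. t powr a * (1 - t) powr b) has_integral
      fact a * fact b / fact (a + b + 1)) {0<..<1}"
    by (simp add: has_integral_Icc_iff_Ioo)
  have "((\<lambda>t::real. t ^ a * (1 - t) ^ b) has_integral fact a * fact b / fact (a + b + 1)) {0<..<1}"
    by (rule has_integral_spike_finite[OF finite.emptyI _ powr]) (simp add: powr_realpow)
  then show ?thesis
    by (simp add: has_integral_Icc_iff_Ioo)
qed

lemma bw_norm_sq_has_integral:
  fixes P :: "complex poly"
  shows "((\<lambda>t. \<Sum>k\<le>degree P. (cmod (coeff P k))\<^sup>2 * (t ^ k * (1 - t) ^ (degree P - k)))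
    has_integral (bw_norm P)\<^sup>2 / (degree P + 1)) {0..1}"
proof -
  define n where "n = degree P"
  have "(bw_norm P)\<^sup>2 / (n + 1) = (\<Sum>k\<le>n. (cmod (coeff P k))\<^sup>2 / real (n choose k) / (n + 1))"
    by (simp add: bw_norm_def n_def sum_nonneg sum_divide_distrib)
  also have "\<dots> = (\<Sum>k\<le>n. (cmod (coeff P k))\<^sup>2 * (fact k * fact (n - k) / fact (k + (n - k) + 1)))"
  proof (rule sum.cong[OF refl])
    fix k
    assume k: "k \<in> {..n}"
    then have binomial: "fact k * fact (n - k) * real (n choose k) = (fact n :: real)"
      by (metis atMost_iff binomial_fact_lemma of_nat_fact of_nat_mult)
    have "(fact (k + (n - k) + 1) :: real) = (real n + 1) * fact n"
      using k by (simp add: algebra_simps)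
    then have fact_Suc_n: "(fact (k + (n - k) + 1) :: real)
        = (real n + 1) * (fact k * fact (n - k) * real (n choose k))"
      by (simp only: binomial)
    show "(cmod (coeff P k))\<^sup>2 / real (n choose k) / (n + 1)
        = (cmod (coeff P k))\<^sup>2 * (fact k * fact (n - k) / fact (k + (n - k) + 1))"
      using k unfolding fact_Suc_n by (simp add: divide_simps)
  qed
  finally have "(bw_norm P)\<^sup>2 / (n + 1)
      = (\<Sum>k\<le>n. (cmod (coeff P k))\<^sup>2 * (fact k * fact (n - k) / fact (k + (n - k) + 1)))" .
  moreover have "((\<lambda>t. \<Sum>k\<le>n. (cmod (coeff P k))\<^sup>2 * (t ^ k * (1 - t) ^ (n - k))) has_integral
      (\<Sum>k\<le>n. (cmod (coeff P k))\<^sup>2 * (fact k * fact (n - k) / fact (k + (n - k) + 1)))) {0..1}"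
    by (intro has_integral_sum has_integral_mult_right has_integral_power_mult_power_one_minus) simp
  ultimately show ?thesis
    by (simp add: n_def)
qed

lemma prod_one_plus_cmod_sq_le_bw_norm_sq:
  fixes z :: "'i \<Rightarrow> complex"
  assumes "finite I"
  shows "exp (- real (card I)) * (\<Prod>i\<in>I. 1 + (cmod (z i))\<^sup>2)
    \<le> (bw_norm (\<Prod>i\<in>I. [:- z i, 1:]))\<^sup>2 / (card I + 1)"
proof -
  define P where "P = (\<Prod>i\<in>I. [:- z i, 1:])"
  have "degree P = card I"
    by (simp add: P_def degree_prod_sum_eq)
  then have weighted: "((\<lambda>t. \<Sum>k\<le>card I. (cmod (coeff P k))\<^sup>2 * (t ^ k * (1 - t) ^ (card I - k)))
      has_integral (bw_norm P)\<^sup>2 / (card I + 1)) {0..1}"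
    using bw_norm_sq_has_integral[of P] by simp
  have "exp (- real (card I)) * (\<Prod>i\<in>I. 1 + (cmod (z i))\<^sup>2)
      \<le> integral {0..1} (\<lambda>t. \<Prod>i\<in>I. max t ((cmod (z i))\<^sup>2 * (1 - t)))"
    by (rule prod_one_plus_le_integral_prod_max[OF assms]) simp
  also have "\<dots> \<le> integral {0..1}
      (\<lambda>t. \<Sum>k\<le>card I. (cmod (coeff P k))\<^sup>2 * (t ^ k * (1 - t) ^ (card I - k)))"
    unfolding P_def using weighted[unfolded P_def]
    by (intro integral_le integrable_continuous_real continuous_intros prod_max_le_weighted_coeff_sum)
      (auto simp: assms)
  also have "\<dots> = (bw_norm P)\<^sup>2 / (card I + 1)"
    using weighted by (rule integral_unique)
  finally show ?thesis
    by (simp add: P_def)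
qed

theorem theorem1p2:
  fixes N :: nat and z :: "nat \<Rightarrow> complex"
  assumes "N \<ge> 1"
  shows "(\<Prod>i=1..N. bw_norm [:- z i, 1:])
    \<le> sqrt (exp (real N) / (real N + 1)) * bw_norm (\<Prod>i=1..N. [:- z i, 1:])"
proof (rule power2_le_imp_le)
  \<comment> \<open>The bound also holds for \<open>N = 0\<close>.\<close>
  define P where "P = (\<Prod>i=1..N. [:- z i, 1:])"
  have "(\<Prod>i=1..N. bw_norm [:- z i, 1:])\<^sup>2 = (\<Prod>i=1..N. 1 + (cmod (z i))\<^sup>2)"
    by (simp add: bw_norm_def prod_power_distrib add.commute)
  also have "\<dots> \<le> exp (real N) * (bw_norm P)\<^sup>2 / (N + 1)"
    using prod_one_plus_cmod_sq_le_bw_norm_sq[of "{1..N}" z]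
    by (simp add: P_def exp_minus field_simps)
  also have "\<dots> = (sqrt (exp (real N) / (real N + 1)) * bw_norm P)\<^sup>2"
    by (simp add: power_mult_distrib)
  finally show "(\<Prod>i=1..N. bw_norm [:- z i, 1:])\<^sup>2
      \<le> (sqrt (exp (real N) / (real N + 1)) * bw_norm (\<Prod>i=1..N. [:- z i, 1:]))\<^sup>2"
    by (simp add: P_def)
  show "0 \<le> sqrt (exp (real N) / (real N + 1)) * bw_norm (\<Prod>i=1..N. [:- z i, 1:])"
    by (simp add: bw_norm_def sum_nonneg)
qed

end
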